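(* Let $C_n=\frac{1}{n+1}\binom{2n}{n}$ be the Catalan numbers. Then for every even integer $n\ge2$, $$C_n=\frac{1}{4n}\sum_{h=0}^{n-2}\binom{n}{h}(-1)^h4^{n-h}C_{h+1},$$ and for every odd integer $n\ge1$, $$C_{n+1}=\frac12\sum_{h=0}^{n-1}\binom{n}{h}(-1)^h4^{n-h}C_{h+1}.$$ *)

theory Defs
  imports Complex_Main
begin

definition catalan :: "nat \<Rightarrow> real" where
  "catalan n = real ((2*n) choose n) / real (n + 1)"

end

theory Submission
  imports Defs "HOL-Computational_Algebra.Formal_Power_Series"
begin

text \<open>
  The Catalan number C(k) equals -(1/2) (-4)^(k+1) (1/2 gchoose k+1). Substituted into the
  binomial transform \<Sum>h. (n choose h) (-1)^h 4^(n-h) C(h+1), the powers combine to 4^n and what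
  remains is a Vandermonde convolution, equal to (n + 1/2 gchoose n+2). Negating the upper index
  turns this into (-1)^n (1/2 gchoose n+2), so the full transform is C(n+1). Both identities
  follow by moving the last summand (n odd) or the last two summands (n even) to the other side.
\<close>

lemma central_binomial_Suc: "Suc k * (2 * Suc k choose Suc k) = 2 * (2 * k + 1) * (2 * k choose k)"
proof -
  have "Suc k * (2 * Suc k choose Suc k) = 2 * (Suc k * (Suc (2 * k) choose k))"
    using Suc_times_binomial[of k "Suc (2 * k)"] by (simp del: binomial_Suc_Suc)
  also have "Suc (2 * k) choose k = Suc (2 * k) choose Suc k"
    using binomial_symmetric[of k "Suc (2 * k)"] by (simp del: binomial_Suc_Suc)
  also have "Suc k * (Suc (2 * k) choose Suc k) = (2 * k + 1) * (2 * k choose k)"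
    using Suc_times_binomial[of k "2 * k"] by (simp del: binomial_Suc_Suc)
  finally show ?thesis by simp
qed

lemma catalan_Suc: "real (k + 2) * catalan (Suc k) = 2 * (2 * real k + 1) * catalan k"
proof -
  have "real (k + 2) * catalan (Suc k) = real (2 * Suc k choose Suc k)"
    by (simp add: catalan_def del: binomial_Suc_Suc)
  also have "\<dots> = 2 * (2 * real k + 1) * real (2 * k choose k) / real (k + 1)"
  proof (intro nonzero_eq_divide_eq[THEN iffD2])
    show "real (2 * Suc k choose Suc k) * real (k + 1) = 2 * (2 * real k + 1) * real (2 * k choose k)"
      using arg_cong[OF central_binomial_Suc[of k], of real]
      by (simp add: algebra_simps del: binomial_Suc_Suc)
  qed simp
  also have "\<dots> = 2 * (2 * real k + 1) * catalan k"
    by (simp add: catalan_def)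
  finally show ?thesis .
qed

lemma catalan_gbinomial: "catalan k = - (1/2) * (-4) ^ (k + 1) * ((1/2 :: real) gchoose (k + 1))"
proof (induction k)
  case 0
  then show ?case by (simp add: catalan_def)
next
  case (Suc k)
  define G where "G j = (1/2 :: real) gchoose j" for j
  have G_rec: "-4 * (real (k + 2) * G (k + 2)) = 2 * (2 * real k + 1) * G (k + 1)"
    using gbinomial_mult_1[of "1/2 :: real" "k + 1"] by (simp add: G_def algebra_simps)
  have "real (k + 2) * (- (1/2) * (-4) ^ (k + 2) * G (k + 2))
      = - (1/2) * (-4) ^ (k + 1) * (-4 * (real (k + 2) * G (k + 2)))"
    by (simp add: algebra_simps)
  also have "\<dots> = 2 * (2 * real k + 1) * (- (1/2) * (-4) ^ (k + 1) * G (k + 1))"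
    unfolding G_rec by (simp add: algebra_simps)
  also have "\<dots> = real (k + 2) * catalan (Suc k)"
    using catalan_Suc[of k] Suc.IH by (simp add: G_def)
  finally have "- (1/2) * (-4) ^ (k + 2) * G (k + 2) = catalan (Suc k)"
    by (rule mult_left_cancel[THEN iffD1, rotated]) simp
  then show ?case by (simp add: G_def)
qed

lemma gbinomial_Vandermonde_shifted:
  fixes a :: "'a::field_char_0"
  shows "(\<Sum>h=0..n. of_nat (n choose h) * (a gchoose (h + m))) = (a + of_nat n) gchoose (n + m)"
proof -
  have "(a + of_nat n) gchoose (n + m) = (\<Sum>k=0..n + m. (a gchoose k) * (of_nat n gchoose (n + m - k)))"
    by (rule gbinomial_Vandermonde[symmetric])
  also have "\<dots> = (\<Sum>k=m..n + m. (a gchoose k) * (of_nat n gchoose (n + m - k)))"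
    by (rule sum.mono_neutral_right) (auto simp: binomial_gbinomial[symmetric])
  also have "\<dots> = (\<Sum>h=0..n. (a gchoose (h + m)) * (of_nat n gchoose (n - h)))"
    using sum.shift_bounds_cl_nat_ivl[of "\<lambda>k. (a gchoose k) * (of_nat n gchoose (n + m - k))" 0 m n]
    by simp
  also have "\<dots> = (\<Sum>h=0..n. of_nat (n choose h) * (a gchoose (h + m)))"
    by (rule sum.cong) (auto simp: binomial_gbinomial[symmetric] binomial_symmetric[symmetric])
  finally show ?thesis ..
qed

lemma catalan_binomial_transform:
  "(\<Sum>h=0..n. real (n choose h) * (-1) ^ h * 4 ^ (n - h) * catalan (h + 1)) = catalan (n + 1)"
proof -
  define G where "G j = (1/2 :: real) gchoose j" for j
  have catalan_G: "catalan (h + 1) = -8 * (-4) ^ h * G (h + 2)" for h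
    by (simp add: catalan_gbinomial G_def)
  have minus_four_power: "(-4 :: real) ^ j = (-1) ^ j * 4 ^ j" for j
    by (simp flip: power_mult_distrib)
  have summand: "real (n choose h) * (-1) ^ h * 4 ^ (n - h) * catalan (h + 1)
      = -8 * 4 ^ n * (real (n choose h) * G (h + 2))" if "h \<le> n" for h
  proof -
    have "(-1) ^ h * 4 ^ (n - h) * (-4) ^ h = ((-1) * (-4)) ^ h * (4 :: real) ^ (n - h)"
      by (simp only: power_mult_distrib ac_simps)
    also have "\<dots> = 4 ^ n"
      using that by (simp flip: power_add)
    finally show ?thesis
      unfolding catalan_G by (simp add: algebra_simps)
  qed
  have "(\<Sum>h=0..n. real (n choose h) * (-1) ^ h * 4 ^ (n - h) * catalan (h + 1))
      = -8 * 4 ^ n * (\<Sum>h=0..n. real (n choose h) * G (h + 2))"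
    unfolding sum_distrib_left by (intro sum.cong refl summand) simp
  also have "(\<Sum>h=0..n. real (n choose h) * G (h + 2)) = (1/2 + real n) gchoose (n + 2)"
    unfolding G_def by (rule gbinomial_Vandermonde_shifted)
  also have "\<dots> = (-1) ^ n * G (n + 2)"
    using gbinomial_negated_upper[of "1/2 + real n" "n + 2"] by (simp add: G_def)
  also have "-8 * 4 ^ n * ((-1) ^ n * G (n + 2)) = catalan (n + 1)"
    unfolding catalan_G by (simp add: minus_four_power)
  finally show ?thesis .
qed

lemma catalan_binomial_transform_odd:
  assumes "odd n"
  shows "(\<Sum>h=0..n-1. real (n choose h) * (-1) ^ h * 4 ^ (n - h) * catalan (h + 1)) = 2 * catalan (n + 1)"
proof -
  obtain m where n: "n = Suc m"
    using assms by (cases n) auto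
  have "catalan (n + 1) = (\<Sum>h=0..m. real (n choose h) * (-1) ^ h * 4 ^ (n - h) * catalan (h + 1))
      - catalan (n + 1)"
    using catalan_binomial_transform[of n] assms by (simp add: n)
  then show ?thesis
    by (simp add: n)
qed

lemma catalan_binomial_transform_even:
  assumes "even n" "n \<ge> 2"
  shows "(\<Sum>h=0..n-2. real (n choose h) * (-1) ^ h * 4 ^ (n - h) * catalan (h + 1)) = 4 * real n * catalan n"
proof -
  obtain m where n: "n = Suc (Suc m)"
    using assms(2) by (metis add_2_eq_Suc le_Suc_ex)
  have "catalan (n + 1) = (\<Sum>h=0..m. real (n choose h) * (-1) ^ h * 4 ^ (n - h) * catalan (h + 1))
      - 4 * real n * catalan n + catalan (n + 1)"
    using catalan_binomial_transform[of n] assms(1) by (simp add: n algebra_simps)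
  then show ?thesis
    by (simp add: n)
qed

theorem mainTheorem12:
  shows "(\<forall>n::nat. even n \<and> n \<ge> 2 \<longrightarrow>
            catalan n = (1 / (4 * real n)) *
              (\<Sum>h=0..n-2. real (n choose h) * (-1) ^ h * 4 ^ (n - h) * catalan (h + 1)))
       \<and> (\<forall>n::nat. odd n \<longrightarrow>
            catalan (n + 1) = (1 / 2) *
              (\<Sum>h=0..n-1. real (n choose h) * (-1) ^ h * 4 ^ (n - h) * catalan (h + 1)))"
proof (intro conjI allI impI)
  fix n :: nat
  assume n: "even n \<and> n \<ge> 2"
  show "catalan n = (1 / (4 * real n)) *
      (\<Sum>h=0..n-2. real (n choose h) * (-1) ^ h * 4 ^ (n - h) * catalan (h + 1))"
    unfolding catalan_binomial_transform_even[OF n[THEN conjunct1] n[THEN conjunct2]]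
    using n by simp
next
  fix n :: nat
  assume "odd n"
  show "catalan (n + 1) = (1 / 2) *
      (\<Sum>h=0..n-1. real (n choose h) * (-1) ^ h * 4 ^ (n - h) * catalan (h + 1))"
    unfolding catalan_binomial_transform_odd[OF \<open>odd n\<close>] by simp
qed

end
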